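(* Let $(l,k,b)$ be a suspension triplet for $(X_A,\sigma_A)$. Then the one-sided suspension space $S^{l,k}_{A,b}$ is a compact Hausdorff space.
   Context: Let $N>1$ and $A$ an irreducible $N\times N$ $\{0,1\}$-matrix which is not a permutation matrix. $X_A$ is the compact space of sequences $(x_n)_{n\in\mathbb N}$, $x_n\in\{1,\dots,N\}$, $A(x_n,x_{n+1})=1$ (product topology), with $\sigma_A((x_n)_n)=(x_{n+1})_n$. $\mathbb Z_+$, $\mathbb R_+$ are nonnegative integers/reals. $H^A$ is the quotient of $C(X_A,\mathbb Z)$ by $\{u-u\circ\sigma_A\}$, $H^A_+$ the classes of $\mathbb Z_+$-valued continuous functions; $[f]\in H^A_+$ is an order unit if for every $[u]\in H^A$ some $n\in\mathbb N$ has $n[f]-[u]\in H^A_+$. A suspension triplet is $(l,k,b)$ with $l,k\in C(X_A,\mathbb R_+)$, $b\in C(X_A,\mathbb R)$ such that $c=l-k$ is integer-valued with $[c]$ an order unit, and $l-b$, $k-b\circ\sigma_A$ take values in $\mathbb Z_+$. $X^{\mathbb R}_{A,b}=\{(x,r)\in X_A\times\mathbb R: r\ge b(x)\}$ (subspace topology of $X_A\times\mathbb R$), $\sim_{l,k}$ is the equivalence relation generated by $(x,r)\sim_{l,k}(\sigma_A(x),r-c(x))$ whenever $r\ge l(x)$, and $S^{l,k}_{A,b}=X^{\mathbb R}_{A,b}/\!\sim_{l,k}$ with the quotient topology. *)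

theory Defs
  imports "HOL-Analysis.Analysis"
begin

text \<open>Matrices are N x N {0,1}-matrices indexed by {1..N}, given as functions nat => nat => nat.\<close>

fun mat_pow :: "nat \<Rightarrow> (nat \<Rightarrow> nat \<Rightarrow> nat) \<Rightarrow> nat \<Rightarrow> nat \<Rightarrow> nat \<Rightarrow> nat" where
  "mat_pow N A 0 i j = (if i = j then 1 else 0)"
| "mat_pow N A (Suc n) i j = (\<Sum>m\<in>{1..N}. mat_pow N A n i m * A m j)"

definition zero_one_matrix :: "nat \<Rightarrow> (nat \<Rightarrow> nat \<Rightarrow> nat) \<Rightarrow> bool" where
  "zero_one_matrix N A \<longleftrightarrow> (\<forall>i\<in>{1..N}. \<forall>j\<in>{1..N}. A i j \<in> {0, 1})"

definition irreducible_matrix :: "nat \<Rightarrow> (nat \<Rightarrow> nat \<Rightarrow> nat) \<Rightarrow> bool" where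
  "irreducible_matrix N A \<longleftrightarrow>
     (\<forall>i\<in>{1..N}. \<forall>j\<in>{1..N}. \<exists>n>0. mat_pow N A n i j > 0)"

definition permutation_matrix :: "nat \<Rightarrow> (nat \<Rightarrow> nat \<Rightarrow> nat) \<Rightarrow> bool" where
  "permutation_matrix N A \<longleftrightarrow>
     (\<exists>p. p permutes {1..N} \<and> (\<forall>i\<in>{1..N}. \<forall>j\<in>{1..N}. A i j = (if p i = j then 1 else 0)))"

definition XA :: "nat \<Rightarrow> (nat \<Rightarrow> nat \<Rightarrow> nat) \<Rightarrow> (nat \<Rightarrow> nat) set" where
  "XA N A = {x. \<forall>n. x n \<in> {1..N} \<and> A (x n) (x (Suc n)) = 1}"

definition XA_top :: "nat \<Rightarrow> (nat \<Rightarrow> nat \<Rightarrow> nat) \<Rightarrow> (nat \<Rightarrow> nat) topology" where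
  "XA_top N A = subtopology (product_topology (\<lambda>_. discrete_topology {1..N}) UNIV) (XA N A)"

definition shift :: "(nat \<Rightarrow> nat) \<Rightarrow> (nat \<Rightarrow> nat)" where
  "shift x = (\<lambda>n. x (Suc n))"

text \<open>Continuous integer-valued functions on X_A (represented as real-valued functions
  taking integer values on X_A).\<close>

definition cont_int :: "nat \<Rightarrow> (nat \<Rightarrow> nat \<Rightarrow> nat) \<Rightarrow> ((nat \<Rightarrow> nat) \<Rightarrow> real) \<Rightarrow> bool" where
  "cont_int N A f \<longleftrightarrow> continuous_map (XA_top N A) euclideanreal f \<and> (\<forall>x\<in>XA N A. f x \<in> \<int>)"

text \<open>[f] is an order unit of (H^A, H^A_+): for every continuous integer function u there
  is n with n[f] - [u] in H^A_+, i.e. n f - u = g + (h - h o sigma) with g continuous, Z_+-valued.\<close>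

definition order_unit :: "nat \<Rightarrow> (nat \<Rightarrow> nat \<Rightarrow> nat) \<Rightarrow> ((nat \<Rightarrow> nat) \<Rightarrow> real) \<Rightarrow> bool" where
  "order_unit N A f \<longleftrightarrow>
     (\<forall>u. cont_int N A u \<longrightarrow>
        (\<exists>n::nat. \<exists>g h. cont_int N A g \<and> (\<forall>x\<in>XA N A. g x \<ge> 0) \<and> cont_int N A h \<and>
            (\<forall>x\<in>XA N A. real n * f x - u x = g x + (h x - h (shift x)))))"

definition suspension_triplet ::
  "nat \<Rightarrow> (nat \<Rightarrow> nat \<Rightarrow> nat) \<Rightarrow> ((nat \<Rightarrow> nat) \<Rightarrow> real) \<Rightarrow> ((nat \<Rightarrow> nat) \<Rightarrow> real)
     \<Rightarrow> ((nat \<Rightarrow> nat) \<Rightarrow> real) \<Rightarrow> bool" where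
  "suspension_triplet N A l k b \<longleftrightarrow>
     continuous_map (XA_top N A) euclideanreal l \<and> (\<forall>x\<in>XA N A. l x \<ge> 0) \<and>
     continuous_map (XA_top N A) euclideanreal k \<and> (\<forall>x\<in>XA N A. k x \<ge> 0) \<and>
     continuous_map (XA_top N A) euclideanreal b \<and>
     cont_int N A (\<lambda>x. l x - k x) \<and> order_unit N A (\<lambda>x. l x - k x) \<and>
     (\<forall>x\<in>XA N A. l x - b x \<in> \<int> \<and> l x - b x \<ge> 0) \<and>
     (\<forall>x\<in>XA N A. k x - b (shift x) \<in> \<int> \<and> k x - b (shift x) \<ge> 0)"

definition XR :: "nat \<Rightarrow> (nat \<Rightarrow> nat \<Rightarrow> nat) \<Rightarrow> ((nat \<Rightarrow> nat) \<Rightarrow> real) \<Rightarrow> ((nat \<Rightarrow> nat) \<times> real) set" where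
  "XR N A b = {(x, r). x \<in> XA N A \<and> r \<ge> b x}"

definition XR_top :: "nat \<Rightarrow> (nat \<Rightarrow> nat \<Rightarrow> nat) \<Rightarrow> ((nat \<Rightarrow> nat) \<Rightarrow> real) \<Rightarrow> ((nat \<Rightarrow> nat) \<times> real) topology" where
  "XR_top N A b = subtopology (prod_topology (XA_top N A) euclideanreal) (XR N A b)"

definition susp_gen :: "nat \<Rightarrow> (nat \<Rightarrow> nat \<Rightarrow> nat) \<Rightarrow> ((nat \<Rightarrow> nat) \<Rightarrow> real) \<Rightarrow> ((nat \<Rightarrow> nat) \<Rightarrow> real)
    \<Rightarrow> ((nat \<Rightarrow> nat) \<Rightarrow> real) \<Rightarrow> (((nat \<Rightarrow> nat) \<times> real) \<times> ((nat \<Rightarrow> nat) \<times> real)) set" where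
  "susp_gen N A l k b = {((x, r), (shift x, r - (l x - k x))) | x r. (x, r) \<in> XR N A b \<and> r \<ge> l x}"

definition gen_equiv :: "'a set \<Rightarrow> ('a \<times> 'a) set \<Rightarrow> ('a \<times> 'a) set" where
  "gen_equiv S R = ((R \<union> R\<inverse>)\<^sup>* \<inter> (S \<times> S))"

definition quotient_topology :: "'a topology \<Rightarrow> ('a \<times> 'a) set \<Rightarrow> 'a set topology" where
  "quotient_topology X E = topology (\<lambda>U. U \<subseteq> topspace X // E \<and> openin X (\<Union>U))"

definition suspension_space :: "nat \<Rightarrow> (nat \<Rightarrow> nat \<Rightarrow> nat) \<Rightarrow> ((nat \<Rightarrow> nat) \<Rightarrow> real)
    \<Rightarrow> ((nat \<Rightarrow> nat) \<Rightarrow> real) \<Rightarrow> ((nat \<Rightarrow> nat) \<Rightarrow> real) \<Rightarrow> ((nat \<Rightarrow> nat) \<times> real) set topology" where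
  "suspension_space N A l k b =
     quotient_topology (XR_top N A b) (gen_equiv (XR N A b) (susp_gen N A l k b))"

end

theory Submission
  imports Defs
begin

text \<open>The quotient is the image of the compact set of points of \<open>X\<^sup>\<real>\<^sub>A\<^sub>,\<^sub>b\<close> of height at most
  \<open>max l\<close>, which meets every class; hence it is compact. For the Hausdorff property the key
  is that an equivalence class can only be traversed boundedly often below a given height: since
  \<open>[c]\<close> is an order unit, \<open>n c - 1\<close> is cohomologous to a nonnegative function for some \<open>n\<close>,
  so the Birkhoff sums of \<open>c\<close> grow linearly, while the heights stay above the nonnegative roof
  \<open>l\<close>. Consequently the saturation of a closed bounded set is a finite union of compact
  projections on every bounded slab, hence closed, and disjoint classes can be separated by
  saturated open sets.\<close>

section \<open>Quotient topologies\<close>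

lemma equiv_gen_equiv: "equiv S (gen_equiv S R)"
proof -
  have "sym ((R \<union> R\<inverse>)\<^sup>*)"
    by (simp add: sym_rtrancl sym_Un_converse)
  then show ?thesis
    unfolding gen_equiv_def equiv_def refl_on_def sym_def trans_def
    by (auto intro: rtrancl_trans)
qed

lemma istopology_quotient:
  assumes "equiv (topspace X) E"
  shows "istopology (\<lambda>U. U \<subseteq> topspace X // E \<and> openin X (\<Union>U))"
  unfolding istopology_def
proof (rule conjI; intro allI impI)
  fix S T assume S: "S \<subseteq> topspace X // E \<and> openin X (\<Union>S)"
    and T: "T \<subseteq> topspace X // E \<and> openin X (\<Union>T)"
  have "\<Union>(S \<inter> T) = \<Union>S \<inter> \<Union>T"
    using S T quotient_disj[OF assms] by blast
  then show "S \<inter> T \<subseteq> topspace X // E \<and> openin X (\<Union>(S \<inter> T))"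
    using S T by auto
next
  fix K assume K: "\<forall>U\<in>K. U \<subseteq> topspace X // E \<and> openin X (\<Union>U)"
  have "\<Union>(\<Union>K) = \<Union>(Union ` K)" by blast
  with K show "\<Union>K \<subseteq> topspace X // E \<and> openin X (\<Union>(\<Union>K))"
    by (auto intro: openin_Union)
qed

lemma openin_quotient_topology:
  "equiv (topspace X) E \<Longrightarrow>
    openin (quotient_topology X E) U \<longleftrightarrow> U \<subseteq> topspace X // E \<and> openin X (\<Union>U)"
  unfolding quotient_topology_def by (simp add: topology_inverse' istopology_quotient)

lemma topspace_quotient_topology:
  assumes "equiv (topspace X) E"
  shows "topspace (quotient_topology X E) = topspace X // E"
proof -
  have "openin (quotient_topology X E) (topspace X // E)"
    using assms by (simp add: openin_quotient_topology Union_quotient)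
  then show ?thesis
    using openin_subset unfolding topspace_def openin_quotient_topology[OF assms] by blast
qed

lemma continuous_map_quotient_class:
  assumes E: "equiv (topspace X) E"
  shows "continuous_map X (quotient_topology X E) (\<lambda>p. E `` {p})"
  unfolding continuous_map
proof (intro conjI allI impI)
  show "(\<lambda>p. E `` {p}) ` topspace X \<subseteq> topspace (quotient_topology X E)"
    by (auto simp: topspace_quotient_topology[OF E] intro: quotientI)
next
  fix U assume "openin (quotient_topology X E) U"
  then have U: "U \<subseteq> topspace X // E" "openin X (\<Union>U)"
    by (simp_all add: openin_quotient_topology[OF E])
  have "{p \<in> topspace X. E `` {p} \<in> U} = \<Union>U"
  proof (intro equalityI subsetI)
    fix p assume "p \<in> \<Union>U"
    then obtain C where "C \<in> U" "p \<in> C" by blast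
    moreover obtain a where "a \<in> topspace X" "C = E `` {a}"
      using U(1) \<open>C \<in> U\<close> by (blast elim: quotientE)
    moreover have "p \<in> topspace X"
      using \<open>C = E `` {a}\<close> \<open>p \<in> C\<close> equiv_type[OF E] by blast
    ultimately show "p \<in> {p \<in> topspace X. E `` {p} \<in> U}"
      using equiv_class_eq[OF E] by auto
  qed (use equiv_class_self[OF E] in blast)
  with U show "openin X {p \<in> topspace X. E `` {p} \<in> U}" by simp
qed

lemma compact_space_quotient_topology:
  assumes E: "equiv (topspace X) E" and "compactin X K"
    and meets: "\<And>p. p \<in> topspace X \<Longrightarrow> \<exists>q\<in>K. (p, q) \<in> E"
  shows "compact_space (quotient_topology X E)"
proof -
  have "(\<lambda>p. E `` {p}) ` K = topspace X // E"
  proof (intro equalityI subsetI)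
    fix C assume "C \<in> topspace X // E"
    then obtain p where "p \<in> topspace X" "C = E `` {p}" by (blast elim: quotientE)
    with meets obtain q where "q \<in> K" "C = E `` {q}" by (metis equiv_class_eq[OF E])
    then show "C \<in> (\<lambda>p. E `` {p}) ` K" by blast
  qed (use \<open>compactin X K\<close> compactin_subset_topspace in \<open>auto intro: quotientI\<close>)
  then show ?thesis
    using image_compactin[OF \<open>compactin X K\<close> continuous_map_quotient_class[OF E]]
    by (simp add: compact_space_def topspace_quotient_topology[OF E])
qed

lemma openin_quotient_topology_disjnt_saturation:
  assumes E: "equiv (topspace X) E" and "closedin X (E `` D)"
  shows "openin (quotient_topology X E) {C \<in> topspace X // E. disjnt C (E `` D)}"
proof -
  have "\<Union>{C \<in> topspace X // E. disjnt C (E `` D)} = topspace X - E `` D"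
  proof (intro equalityI subsetI)
    fix p assume p: "p \<in> topspace X - E `` D"
    have "disjnt (E `` {p}) (E `` D)"
      using p E unfolding disjnt_def equiv_def sym_def trans_def by blast
    then show "p \<in> \<Union>{C \<in> topspace X // E. disjnt C (E `` D)}"
      using p equiv_class_self[OF E] by (blast intro: quotientI)
  qed (use Union_quotient[OF E] in \<open>auto simp: disjnt_def\<close>)
  then show ?thesis
    using assms by (simp add: openin_quotient_topology openin_diff)
qed

text \<open>Separate the traces of two classes on \<open>K\<close> by open sets \<open>W\<^sub>1, W\<^sub>2\<close>; the complements of the
  (closed) saturations of \<open>K - W\<^sub>1\<close> and \<open>K - W\<^sub>2\<close> are then disjoint, because every class meets
  \<open>K\<close>, and they contain the respective classes.\<close>

lemma Hausdorff_space_quotient_topology: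
  assumes E: "equiv (topspace X) E" and X: "Hausdorff_space X" and K: "compactin X K"
    and meets: "\<And>p. p \<in> topspace X \<Longrightarrow> \<exists>q\<in>K. (p, q) \<in> E"
    and closed_saturation: "\<And>D. closedin X D \<Longrightarrow> D \<subseteq> K \<Longrightarrow> closedin X (E `` D)"
  shows "Hausdorff_space (quotient_topology X E)"
  unfolding Hausdorff_space_def topspace_quotient_topology[OF E]
proof (intro allI impI)
  fix C1 C2 assume C: "C1 \<in> topspace X // E \<and> C2 \<in> topspace X // E \<and> C1 \<noteq> C2"
  have K_sub: "K \<subseteq> topspace X" and K_closed: "closedin X K"
    using K X compactin_subset_topspace compactin_imp_closedin by blast+
  have class_in_K: "\<exists>q\<in>K. C = E `` {q}" if "C \<in> topspace X // E" for C
    using that meets by (metis quotientE equiv_class_eq[OF E])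
  have compact_trace: "compactin X (C \<inter> K)" if C: "C \<in> topspace X // E" for C
  proof -
    obtain q where "q \<in> K" "C = E `` {q}" using class_in_K[OF C] by blast
    then have "closedin X C"
      using K_sub closedin_Hausdorff_singleton[OF X] by (auto intro: closed_saturation)
    then show ?thesis
      using closed_compactin[OF K] K_closed by blast
  qed
  have "disjnt (C1 \<inter> K) (C2 \<inter> K)"
    using C quotient_disj[OF E] unfolding disjnt_def by blast
  then obtain W1 W2 where W: "openin X W1" "openin X W2" "C1 \<inter> K \<subseteq> W1" "C2 \<inter> K \<subseteq> W2"
      "disjnt W1 W2"
    using X C compact_trace unfolding Hausdorff_space_compact_sets by metis
  define U where "U W = {C \<in> topspace X // E. disjnt C (E `` (K - W))}" for W
  have open_U: "openin (quotient_topology X E) (U W)" if "openin X W" for W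
    unfolding U_def
    using that K_closed by (intro openin_quotient_topology_disjnt_saturation E closed_saturation) auto
  have in_U: "C \<in> U W" if C: "C \<in> topspace X // E" "C \<inter> K \<subseteq> W" for C W
  proof -
    obtain q where "q \<in> K" "C = E `` {q}" using class_in_K[OF C(1)] by blast
    then show ?thesis
      using C E unfolding U_def disjnt_def equiv_def sym_def trans_def by blast
  qed
  have "disjnt (U W1) (U W2)"
  proof -
    have False if C: "C \<in> U W1" "C \<in> U W2" for C
    proof -
      obtain q where q: "q \<in> K" "C = E `` {q}" using class_in_K C(1) unfolding U_def by blast
      then have "q \<in> C" "(q, q) \<in> E" using equiv_class_self[OF E] K_sub by blast+
      then show False
        using q C W(5) unfolding U_def disjnt_def by blast
    qed
    then show ?thesis unfolding disjnt_def by blast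
  qed
  then show "\<exists>U V. openin (quotient_topology X E) U \<and> openin (quotient_topology X E) V \<and>
      C1 \<in> U \<and> C2 \<in> V \<and> disjnt U V"
    using open_U[OF W(1)] open_U[OF W(2)] in_U C W(3,4) by blast
qed

section \<open>Orbits of a partial map\<close>

definition iterable :: "('a \<Rightarrow> bool) \<Rightarrow> ('a \<Rightarrow> 'a) \<Rightarrow> nat \<Rightarrow> 'a \<Rightarrow> bool" where
  "iterable P f i p \<longleftrightarrow> (\<forall>t<i. P ((f ^^ t) p))"

lemma iterable_0 [simp]: "iterable P f 0 p"
  by (simp add: iterable_def)

lemma iterable_Suc: "iterable P f (Suc i) p \<longleftrightarrow> iterable P f i p \<and> P ((f ^^ i) p)"
  unfolding iterable_def using less_Suc_eq by auto

lemma iterable_Suc': "iterable P f (Suc i) p \<longleftrightarrow> P p \<and> iterable P f i (f p)"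
  unfolding iterable_def All_less_Suc2 by (simp add: funpow_Suc_right del: funpow.simps)

lemma iterable_funpow_in:
  assumes "\<And>p. p \<in> S \<Longrightarrow> P p \<Longrightarrow> f p \<in> S" "p \<in> S" "iterable P f i p"
  shows "(f ^^ i) p \<in> S"
  using assms(3) by (induction i) (auto simp: iterable_Suc assms(1,2))

lemma rtrancl_graph_funpow:
  assumes "\<And>p. p \<in> S \<Longrightarrow> P p \<Longrightarrow> f p \<in> S" "p \<in> S" "iterable P f i p"
  shows "(p, (f ^^ i) p) \<in> {(p, f p) | p. p \<in> S \<and> P p}\<^sup>*"
  using assms(3)
proof (induction i)
  case (Suc i)
  then have "((f ^^ i) p, (f ^^ Suc i) p) \<in> {(p, f p) | p. p \<in> S \<and> P p}"
    using iterable_funpow_in[OF assms(1,2)] by (auto simp: iterable_Suc)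
  with Suc show ?case by (auto simp: iterable_Suc intro: rtrancl_into_rtrancl)
qed simp

lemma orbits_meet_if_rtrancl_graph:
  assumes "(p, q) \<in> (R \<union> R\<inverse>)\<^sup>*" and R: "R = {(p, f p) | p. p \<in> S \<and> P p}"
  shows "\<exists>i j. iterable P f i p \<and> iterable P f j q \<and> (f ^^ i) p = (f ^^ j) q"
  using assms(1)
proof (induction rule: rtrancl_induct)
  case base
  show ?case using iterable_0 funpow_0 by metis
next
  case (step q q')
  then obtain i j where ij: "iterable P f i p" "iterable P f j q" "(f ^^ i) p = (f ^^ j) q"
    by blast
  from step(2) consider "P q" "q' = f q" | "P q'" "q = f q'"
    unfolding R by blast
  then show ?case
  proof cases
    case 1
    show ?thesis
    proof (cases j)
      case 0
      then have "iterable P f (Suc i) p" "(f ^^ Suc i) p = (f ^^ 0) q'"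
        using ij 1 by (auto simp: iterable_Suc)
      then show ?thesis using iterable_0 by metis
    next
      case (Suc j')
      then have "iterable P f j' q'" "(f ^^ i) p = (f ^^ j') q'"
        using ij 1 by (auto simp: iterable_Suc' funpow_Suc_right simp del: funpow.simps)
      then show ?thesis using ij by blast
    qed
  next
    case 2
    then have "iterable P f (Suc j) q'" "(f ^^ i) p = (f ^^ Suc j) q'"
      using ij by (auto simp: iterable_Suc' funpow_Suc_right simp del: funpow.simps)
    then show ?thesis using ij by blast
  qed
qed

lemma gen_equiv_graph_iff:
  assumes f: "\<And>p. p \<in> S \<Longrightarrow> P p \<Longrightarrow> f p \<in> S"
  defines "R \<equiv> {(p, f p) | p. p \<in> S \<and> P p}"
  shows "(p, q) \<in> gen_equiv S R \<longleftrightarrow>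
    p \<in> S \<and> q \<in> S \<and> (\<exists>i j. iterable P f i p \<and> iterable P f j q \<and> (f ^^ i) p = (f ^^ j) q)"
    (is "_ \<longleftrightarrow> ?orbits_meet")
proof
  assume "(p, q) \<in> gen_equiv S R"
  then show ?orbits_meet
    using orbits_meet_if_rtrancl_graph[OF _ R_def[THEN meta_eq_to_obj_eq]] unfolding gen_equiv_def by blast
next
  assume ?orbits_meet
  then obtain i j where ij: "p \<in> S" "q \<in> S" "iterable P f i p" "iterable P f j q"
      "(f ^^ i) p = (f ^^ j) q"
    by blast
  have "(p, (f ^^ i) p) \<in> R\<^sup>*" "(q, (f ^^ j) q) \<in> R\<^sup>*"
    unfolding R_def using rtrancl_graph_funpow[where S = S and P = P and f = f] f ij by blast+
  with ij have "(p, (f ^^ i) p) \<in> (R \<union> R\<inverse>)\<^sup>*" "((f ^^ i) p, q) \<in> (R \<union> R\<inverse>)\<^sup>*"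
    using rtrancl_mono[of R "R \<union> R\<inverse>"] rtrancl_converseI[of q "(f ^^ j) q" R]
      rtrancl_mono[of "R\<inverse>" "R \<union> R\<inverse>"]
    by (auto simp flip: rtrancl_converse)
  with ij show "(p, q) \<in> gen_equiv S R"
    unfolding gen_equiv_def by (blast intro: rtrancl_trans)
qed

lemma continuous_map_bounded_above:
  assumes "compact_space X" "continuous_map X euclideanreal f"
  obtains B where "\<And>x. x \<in> topspace X \<Longrightarrow> \<bar>f x\<bar> \<le> B"
proof -
  have "compactin euclideanreal (f ` topspace X)"
    using assms image_compactin compact_space_def by blast
  then have "bounded (f ` topspace X)" by (simp add: compact_imp_bounded)
  then show ?thesis using that unfolding bounded_real by auto
qed

lemma continuous_map_funpow:
  "continuous_map X X f \<Longrightarrow> continuous_map X X (f ^^ n)"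
  by (induction n) (auto simp: funpow_Suc_right simp del: funpow.simps(2) intro: continuous_map_compose)

lemma closedin_prod_euclideanreal_if_slices_closed:
  assumes S: "S \<subseteq> topspace (prod_topology X euclideanreal)"
    and slices: "\<And>R. closedin (prod_topology X euclideanreal) {p \<in> S. snd p \<le> R}"
  shows "closedin (prod_topology X euclideanreal) S"
proof -
  let ?Y = "prod_topology X euclideanreal"
  have "openin ?Y (topspace ?Y - S)"
  proof (subst openin_subopen, intro ballI)
    fix p assume p: "p \<in> topspace ?Y - S"
    define W where "W = (topspace ?Y - {q \<in> S. snd q \<le> snd p + 1}) \<inter> {q \<in> topspace ?Y. snd q \<in> {..<snd p + 1}}"
    have "openin ?Y W"
      unfolding W_def using slices
      by (intro openin_Int openin_diff openin_topspace
          openin_continuous_map_preimage[OF continuous_map_snd]) auto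
    moreover have "p \<in> W" "W \<subseteq> topspace ?Y - S"
      using p unfolding W_def by auto
    ultimately show "\<exists>T. openin ?Y T \<and> p \<in> T \<and> T \<subseteq> topspace ?Y - S" by blast
  qed
  with S show ?thesis unfolding closedin_def by blast
qed

definition birkhoff_sum :: "('a \<Rightarrow> 'a) \<Rightarrow> ('a \<Rightarrow> real) \<Rightarrow> nat \<Rightarrow> 'a \<Rightarrow> real" where
  "birkhoff_sum f c t x = (\<Sum>i<t. c ((f ^^ i) x))"

text \<open>The coboundary telescopes along the orbit to a term bounded by compactness.\<close>

lemma birkhoff_sum_lower_bound:
  assumes X: "compact_space X" and h: "continuous_map X euclideanreal h"
    and f: "\<And>x. x \<in> topspace X \<Longrightarrow> f x \<in> topspace X"
    and g: "\<And>x. x \<in> topspace X \<Longrightarrow> g x \<ge> 0"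
    and cohom: "\<And>x. x \<in> topspace X \<Longrightarrow> a * c x - 1 = g x + (h x - h (f x))"
  obtains H where "\<And>x t. x \<in> topspace X \<Longrightarrow> real t - H \<le> a * birkhoff_sum f c t x"
proof -
  obtain B where B: "\<And>x. x \<in> topspace X \<Longrightarrow> \<bar>h x\<bar> \<le> B"
    using continuous_map_bounded_above[OF X h] by blast
  have orbit: "(f ^^ i) x \<in> topspace X" if "x \<in> topspace X" for x i
    using that f by (induction i) auto
  have "real t - 2 * B \<le> a * birkhoff_sum f c t x" if x: "x \<in> topspace X" for x t
  proof -
    have "a * birkhoff_sum f c t x - real t = (\<Sum>i<t. a * c ((f ^^ i) x) - 1)"
      unfolding birkhoff_sum_def by (simp add: sum_distrib_left sum_subtractf)
    also have "\<dots> = (\<Sum>i<t. g ((f ^^ i) x) + (h ((f ^^ i) x) - h ((f ^^ Suc i) x)))"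
      using cohom orbit[OF x] by (intro sum.cong) auto
    also have "\<dots> = (\<Sum>i<t. g ((f ^^ i) x)) + (h x - h ((f ^^ t) x))"
      by (simp add: sum.distrib sum_lessThan_telescope'[where f = "\<lambda>i. h ((f ^^ i) x)"]
          del: funpow.simps)
    also have "\<dots> \<ge> 0 + (- B - B)"
      using g orbit[OF x] B[OF x] B[OF orbit[OF x, of t]]
      by (intro add_mono sum_nonneg) auto
    finally show ?thesis by linarith
  qed
  then show ?thesis using that by blast
qed

section \<open>The one-sided Markov shift\<close>

lemma topspace_XA_top: "topspace (XA_top N A) = XA N A"
  unfolding XA_top_def XA_def by (auto simp: PiE_def)

lemma shift_in_XA: "x \<in> XA N A \<Longrightarrow> shift x \<in> XA N A"
  unfolding XA_def shift_def by auto

lemma funpow_shift_in_XA: "x \<in> XA N A \<Longrightarrow> (shift ^^ t) x \<in> XA N A"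
  by (induction t) (auto simp: shift_in_XA)

lemma continuous_map_shift: "continuous_map (XA_top N A) (XA_top N A) shift"
proof -
  have "continuous_map (XA_top N A) (product_topology (\<lambda>_. discrete_topology {1..N}) UNIV) shift"
    unfolding XA_top_def continuous_map_componentwise_UNIV shift_def
    by (auto intro!: continuous_map_from_subtopology continuous_map_product_projection)
  then show ?thesis
    using shift_in_XA unfolding continuous_map_in_subtopology[of _ "XA_top N A"]
    by (metis XA_top_def Pi_I continuous_map_in_subtopology topspace_XA_top)
qed

lemma Hausdorff_space_XA_top: "Hausdorff_space (XA_top N A)"
  unfolding XA_top_def
  by (intro Hausdorff_space_subtopology) (simp add: Hausdorff_space_product_topology)

lemma compact_space_XA_top: "compact_space (XA_top N A)"
proof -
  let ?D = "discrete_topology {1..N}"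
  let ?P = "product_topology (\<lambda>_::nat. ?D) UNIV"
  let ?allowed = "{(i, j). i \<in> {1..N} \<and> j \<in> {1..N} \<and> A i j = 1}"
  have "closedin (prod_topology ?D ?D) ?allowed"
    by (intro compactin_imp_closedin finite_imp_compactin)
      (auto simp: Hausdorff_space_prod_topology intro: finite_subset[of _ "{1..N} \<times> {1..N}"])
  then have closed: "closedin ?P {x \<in> topspace ?P. (x n, x (Suc n)) \<in> ?allowed}" for n
    by (rule closedin_continuous_map_preimage[rotated])
      (intro continuous_map_pairedI continuous_map_product_projection; simp)
  have XA_eq: "XA N A = topspace ?P \<inter> (\<Inter>n. {x \<in> topspace ?P. (x n, x (Suc n)) \<in> ?allowed})"
    unfolding XA_def by (auto simp: PiE_def)
  have "closedin ?P (XA N A)"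
    unfolding XA_eq using closed closedin_topspace[of ?P] by (intro closedin_Int closedin_Inter) auto
  then have "compactin ?P (XA N A)"
    by (simp add: closedin_compact_space compact_space_product_topology compact_space_discrete_topology)
  then show ?thesis
    unfolding XA_top_def by (simp add: compact_space_subtopology)
qed

lemma topspace_XR_top: "topspace (XR_top N A b) = XR N A b"
  unfolding XR_top_def XR_def by (auto simp: topspace_XA_top)

section \<open>The suspension of a triplet\<close>

locale suspension =
  fixes N :: nat and A :: "nat \<Rightarrow> nat \<Rightarrow> nat" and l k b :: "(nat \<Rightarrow> nat) \<Rightarrow> real"
  assumes triplet: "suspension_triplet N A l k b"
begin

abbreviation "X \<equiv> XA_top N A"
abbreviation "XxR \<equiv> prod_topology X euclideanreal"
abbreviation "E \<equiv> gen_equiv (XR N A b) (susp_gen N A l k b)"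

definition c :: "(nat \<Rightarrow> nat) \<Rightarrow> real" where
  "c x = l x - k x"

definition descend :: "(nat \<Rightarrow> nat) \<times> real \<Rightarrow> (nat \<Rightarrow> nat) \<times> real" where
  "descend p = (shift (fst p), snd p - c (fst p))"

definition above_roof :: "(nat \<Rightarrow> nat) \<times> real \<Rightarrow> bool" where
  "above_roof p \<longleftrightarrow> l (fst p) \<le> snd p"

abbreviation "admissible \<equiv> iterable above_roof descend"

definition XR_below :: "real \<Rightarrow> ((nat \<Rightarrow> nat) \<times> real) set" where
  "XR_below R = {p \<in> XR N A b. snd p \<le> R}"

lemma continuous_map_l: "continuous_map X euclideanreal l"
  and l_nonneg: "x \<in> XA N A \<Longrightarrow> l x \<ge> 0"
  and continuous_map_b: "continuous_map X euclideanreal b"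
  and k_ge_b_shift: "x \<in> XA N A \<Longrightarrow> k x - b (shift x) \<ge> 0"
  and order_unit_c: "order_unit N A c"
  using triplet unfolding suspension_triplet_def c_def[abs_def] by auto

lemma continuous_map_c: "continuous_map X euclideanreal c"
  using triplet unfolding suspension_triplet_def c_def[abs_def]
  by (intro continuous_map_diff) auto

lemma descend_in_XR: "p \<in> XR N A b \<Longrightarrow> above_roof p \<Longrightarrow> descend p \<in> XR N A b"
  using k_ge_b_shift[of "fst p"] shift_in_XA[of "fst p" N A]
  unfolding XR_def descend_def above_roof_def c_def by auto

lemma susp_gen_eq: "susp_gen N A l k b = {(p, descend p) | p. p \<in> XR N A b \<and> above_roof p}"
  unfolding susp_gen_def descend_def above_roof_def c_def by force

lemma E_iff: "(p, q) \<in> E \<longleftrightarrow> p \<in> XR N A b \<and> q \<in> XR N A b \<and>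
    (\<exists>i j. admissible i p \<and> admissible j q \<and> (descend ^^ i) p = (descend ^^ j) q)"
  unfolding susp_gen_eq by (rule gen_equiv_graph_iff[OF descend_in_XR])

lemma funpow_descend: "(descend ^^ t) (x, r) = ((shift ^^ t) x, r - birkhoff_sum shift c t x)"
  by (induction t) (auto simp: descend_def birkhoff_sum_def)

lemma birkhoff_sum_c_lower_bound:
  obtains a H where "a \<ge> 0" "\<And>x t. x \<in> XA N A \<Longrightarrow> real t - H \<le> a * birkhoff_sum shift c t x"
proof -
  have "cont_int N A (\<lambda>_. 1)" unfolding cont_int_def by auto
  then obtain n :: nat and g h where gh: "cont_int N A g" "\<forall>x\<in>XA N A. g x \<ge> 0" "cont_int N A h"
      "\<forall>x\<in>XA N A. real n * c x - 1 = g x + (h x - h (shift x))"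
    using order_unit_c unfolding order_unit_def by blast
  have h: "continuous_map X euclideanreal h"
    using gh(3) unfolding cont_int_def by blast
  have shift_X: "\<And>x. x \<in> topspace X \<Longrightarrow> shift x \<in> topspace X"
    by (simp add: topspace_XA_top shift_in_XA)
  have g: "\<And>x. x \<in> topspace X \<Longrightarrow> g x \<ge> 0"
    using gh(2) by (simp add: topspace_XA_top)
  have cohom: "\<And>x. x \<in> topspace X \<Longrightarrow> real n * c x - 1 = g x + (h x - h (shift x))"
    using gh(4) by (simp add: topspace_XA_top)
  obtain H where H: "\<And>x t. x \<in> topspace X \<Longrightarrow> real t - H \<le> real n * birkhoff_sum shift c t x"
    using birkhoff_sum_lower_bound[where X = X and h = h and f = shift and g = g and a = "real n"
        and c = c, OF compact_space_XA_top h shift_X g cohom] by blast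
  show ?thesis
    by (rule that[of "real n" H]) (simp_all add: H topspace_XA_top)
qed

text \<open>After \<open>i\<close> descents the height has dropped by a Birkhoff sum of \<open>c\<close>, which grows linearly
  in \<open>i\<close>, while it stays above the nonnegative roof \<open>l\<close>.\<close>

lemma admissible_bounded:
  obtains T where "\<And>p i. p \<in> XR N A b \<Longrightarrow> snd p \<le> R \<Longrightarrow> admissible i p \<Longrightarrow> i \<le> T"
proof -
  obtain a H where a: "a \<ge> 0" and H: "\<And>x t. x \<in> XA N A \<Longrightarrow> real t - H \<le> a * birkhoff_sum shift c t x"
    using birkhoff_sum_c_lower_bound by blast
  obtain T :: nat where T: "a * R + H \<le> real T"
    using real_arch_simple by blast
  have "i \<le> Suc T" if p: "p \<in> XR N A b" "snd p \<le> R" "admissible i p" for p i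
  proof (cases i)
    case (Suc t)
    obtain x r where xr: "p = (x, r)" by force
    have x: "x \<in> XA N A" using p(1) xr unfolding XR_def by auto
    have "l ((shift ^^ t) x) \<le> r - birkhoff_sum shift c t x"
      using p(3) Suc xr by (simp add: iterable_Suc funpow_descend above_roof_def)
    with l_nonneg[OF funpow_shift_in_XA[OF x, of t]] p(2) xr have "birkhoff_sum shift c t x \<le> R"
      by simp
    then have "a * birkhoff_sum shift c t x \<le> a * R"
      using a by (rule mult_left_mono)
    with H[OF x, of t] T have "real t \<le> real T"
      by linarith
    then show ?thesis using Suc by simp
  qed simp
  then show ?thesis by (rule that)
qed

lemma roof_bounded: obtains L where "\<And>x. x \<in> XA N A \<Longrightarrow> l x \<le> L"
proof -
  obtain B where "\<And>x. x \<in> topspace X \<Longrightarrow> \<bar>l x\<bar> \<le> B"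
    using continuous_map_bounded_above[OF compact_space_XA_top continuous_map_l] by blast
  then have "\<And>x. x \<in> XA N A \<Longrightarrow> l x \<le> B"
    by (auto simp: topspace_XA_top abs_le_iff)
  then show ?thesis by (rule that)
qed

text \<open>Descend as long as the point is above the roof; the last point lies below the roof.\<close>

lemma exists_equiv_XR_below:
  assumes p: "p \<in> XR N A b" and L: "\<And>x. x \<in> XA N A \<Longrightarrow> l x \<le> L"
  shows "\<exists>q\<in>XR_below L. (p, q) \<in> E"
proof -
  obtain T where T: "\<And>q i. q \<in> XR N A b \<Longrightarrow> snd q \<le> snd p \<Longrightarrow> admissible i q \<Longrightarrow> i \<le> T"
    by (rule admissible_bounded[of "snd p"]) (rule that)
  have "{i. admissible i p} \<subseteq> {..T}"
    using T[OF p] by auto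
  then have fin: "finite {i. admissible i p}"
    by (rule finite_subset) simp
  define m where "m = Max {i. admissible i p}"
  have "m \<in> {i. admissible i p}"
    unfolding m_def by (rule Max_in[OF fin]) (use iterable_0[of above_roof descend p] in blast)
  then have adm: "admissible m p" by simp
  have "\<not> admissible (Suc m) p"
  proof
    assume "admissible (Suc m) p"
    then have "Suc m \<le> m"
      unfolding m_def by (intro Max_ge[OF fin]) simp
    then show False by simp
  qed
  then have below: "\<not> above_roof ((descend ^^ m) p)"
    using adm by (simp add: iterable_Suc)
  have q: "(descend ^^ m) p \<in> XR N A b"
    using iterable_funpow_in[OF descend_in_XR p adm] .
  moreover have "fst ((descend ^^ m) p) \<in> XA N A"
    using q unfolding XR_def by auto
  ultimately have "(descend ^^ m) p \<in> XR_below L"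
    using L below unfolding XR_below_def above_roof_def by fastforce
  moreover have "(p, (descend ^^ m) p) \<in> E"
    unfolding E_iff using p q adm by (intro conjI exI[of _ m] exI[of _ 0]) auto
  ultimately show ?thesis by blast
qed

lemma topspace_XxR: "topspace XxR = XA N A \<times> UNIV"
  by (simp add: topspace_XA_top)

lemma XR_subset_topspace: "XR N A b \<subseteq> topspace XxR"
  unfolding topspace_XxR XR_def by auto

lemma Hausdorff_space_XxR: "Hausdorff_space XxR"
  by (simp add: Hausdorff_space_prod_topology Hausdorff_space_XA_top)

lemma continuous_map_descend: "continuous_map XxR XxR descend"
proof -
  have "continuous_map XxR X (shift \<circ> fst)" "continuous_map XxR euclideanreal (c \<circ> fst)"
    by (rule continuous_map_compose[OF continuous_map_fst continuous_map_shift]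
        continuous_map_compose[OF continuous_map_fst continuous_map_c])+
  then show ?thesis
    unfolding descend_def[abs_def]
    by (intro continuous_map_pairedI continuous_map_diff continuous_map_snd) (simp_all add: o_def)
qed

lemma closedin_XR: "closedin XxR (XR N A b)"
proof -
  have "XR N A b = {p \<in> topspace XxR. snd p - b (fst p) \<in> {0..}}"
    unfolding XR_def topspace_XxR by auto
  also have "closedin XxR \<dots>"
  proof (rule closedin_continuous_map_preimage)
    have "continuous_map XxR euclideanreal (b \<circ> fst)"
      by (rule continuous_map_compose[OF continuous_map_fst continuous_map_b])
    then show "continuous_map XxR euclideanreal (\<lambda>p. snd p - b (fst p))"
      by (intro continuous_map_diff continuous_map_snd) (simp add: o_def)
  qed auto
  finally show ?thesis .
qed

lemma closedin_admissible: "closedin XxR {p \<in> topspace XxR. admissible i p}"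
proof -
  have closed_step: "closedin XxR {p \<in> topspace XxR. above_roof ((descend ^^ t) p)}" for t
  proof -
    have D: "continuous_map XxR XxR (descend ^^ t)"
      by (rule continuous_map_funpow[OF continuous_map_descend])
    have "continuous_map XxR euclideanreal (snd \<circ> (descend ^^ t))"
      by (rule continuous_map_compose[OF D continuous_map_snd])
    moreover have "continuous_map XxR euclideanreal ((l \<circ> fst) \<circ> (descend ^^ t))"
      by (rule continuous_map_compose[OF D continuous_map_compose[OF continuous_map_fst continuous_map_l]])
    ultimately have "continuous_map XxR euclideanreal
        (\<lambda>p. (snd \<circ> (descend ^^ t)) p - ((l \<circ> fst) \<circ> (descend ^^ t)) p)"
      by (rule continuous_map_diff)
    then have "closedin XxR {p \<in> topspace XxR. (snd \<circ> (descend ^^ t)) p - ((l \<circ> fst) \<circ> (descend ^^ t)) p \<in> {0..}}"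
      by (rule closedin_continuous_map_preimage) simp
    then show ?thesis
      unfolding above_roof_def by simp
  qed
  have "{p \<in> topspace XxR. admissible i p} =
      \<Inter>(insert (topspace XxR) ((\<lambda>t. {p \<in> topspace XxR. above_roof ((descend ^^ t) p)}) ` {..<i}))"
    unfolding iterable_def by auto
  also have "closedin XxR \<dots>"
    using closed_step closedin_topspace[of XxR] by (intro closedin_Inter) auto
  finally show ?thesis .
qed

lemma compactin_XR_below: "compactin XxR (XR_below R)"
proof -
  obtain B where B: "\<And>x. x \<in> topspace X \<Longrightarrow> \<bar>b x\<bar> \<le> B"
    using continuous_map_bounded_above[OF compact_space_XA_top continuous_map_b] by blast
  have "compactin XxR (XA N A \<times> {-B..R})"
    using compact_space_XA_top unfolding compactin_Times compact_space_def topspace_XA_top by auto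
  moreover have "XR_below R \<subseteq> XA N A \<times> {-B..R}"
  proof
    fix p assume "p \<in> XR_below R"
    then have "fst p \<in> XA N A" "b (fst p) \<le> snd p" "snd p \<le> R"
      unfolding XR_below_def XR_def by auto
    moreover have "- B \<le> b (fst p)"
      using B[of "fst p"] \<open>fst p \<in> XA N A\<close> by (simp add: topspace_XA_top abs_le_iff)
    ultimately show "p \<in> XA N A \<times> {-B..R}" by (cases p) auto
  qed
  moreover have "closedin XxR (XR_below R)"
  proof -
    have "XR_below R = XR N A b \<inter> {p \<in> topspace XxR. snd p \<in> {..R}}"
      unfolding XR_below_def using XR_subset_topspace by auto
    also have "closedin XxR \<dots>"
      by (intro closedin_Int closedin_XR closedin_continuous_map_preimage[OF continuous_map_snd]) auto
    finally show ?thesis .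
  qed
  ultimately show ?thesis by (rule closed_compactin)
qed

definition orbits_meet :: "nat \<Rightarrow> nat \<Rightarrow> (((nat \<Rightarrow> nat) \<times> real) \<times> ((nat \<Rightarrow> nat) \<times> real)) set"
  where "orbits_meet i j = {(q, p) \<in> topspace (prod_topology XxR XxR).
    admissible i q \<and> admissible j p \<and> (descend ^^ i) q = (descend ^^ j) p}"

lemma closedin_orbits_meet: "closedin (prod_topology XxR XxR) (orbits_meet i j)"
proof -
  let ?XxR2 = "prod_topology XxR XxR"
  have "orbits_meet i j = {qp \<in> topspace ?XxR2. fst qp \<in> {q \<in> topspace XxR. admissible i q}} \<inter>
      {qp \<in> topspace ?XxR2. snd qp \<in> {p \<in> topspace XxR. admissible j p}} \<inter>
      {qp \<in> topspace ?XxR2. ((descend ^^ i) \<circ> fst) qp = ((descend ^^ j) \<circ> snd) qp}"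
    unfolding orbits_meet_def by auto
  also have "closedin ?XxR2 \<dots>"
    by (intro closedin_Int closedin_continuous_map_preimage[OF continuous_map_fst closedin_admissible]
        closedin_continuous_map_preimage[OF continuous_map_snd closedin_admissible]
        closedin_continuous_maps_eq[OF Hausdorff_space_XxR]
        continuous_map_compose[OF continuous_map_fst continuous_map_funpow[OF continuous_map_descend]]
        continuous_map_compose[OF continuous_map_snd continuous_map_funpow[OF continuous_map_descend]])
  finally show ?thesis .
qed

lemma saturation_Int_XR_below_eq:
  assumes D: "D \<subseteq> XR_below R0"
    and T: "\<And>p i. p \<in> XR N A b \<Longrightarrow> snd p \<le> max R R0 \<Longrightarrow> admissible i p \<Longrightarrow> i \<le> T"
  shows "E `` D \<inter> XR_below R = (\<Union>i\<le>T. \<Union>j\<le>T. fst ` ((XR_below R \<times> D) \<inter> orbits_meet i j))"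
proof (intro equalityI subsetI)
  fix q assume q: "q \<in> E `` D \<inter> XR_below R"
  then obtain p where p: "p \<in> D" "(p, q) \<in> E" by blast
  then obtain i j where ij: "admissible i p" "admissible j q" "(descend ^^ i) p = (descend ^^ j) q"
    unfolding E_iff by blast
  have "p \<in> XR N A b" "q \<in> XR N A b" "snd p \<le> max R R0" "snd q \<le> max R R0"
    using p(1) q D unfolding XR_below_def by auto
  then have "i \<le> T" "j \<le> T"
    using T ij(1,2) by blast+
  moreover have "(q, p) \<in> (XR_below R \<times> D) \<inter> orbits_meet j i"
    using p(1) q ij D XR_subset_topspace unfolding orbits_meet_def XR_below_def by auto
  ultimately show "q \<in> (\<Union>i\<le>T. \<Union>j\<le>T. fst ` ((XR_below R \<times> D) \<inter> orbits_meet i j))"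
    by force
next
  fix q assume "q \<in> (\<Union>i\<le>T. \<Union>j\<le>T. fst ` ((XR_below R \<times> D) \<inter> orbits_meet i j))"
  then obtain i j p where qp: "q \<in> XR_below R" "p \<in> D" "(q, p) \<in> orbits_meet i j"
    by auto
  then have "admissible j p" "admissible i q" "(descend ^^ j) p = (descend ^^ i) q"
    unfolding orbits_meet_def by auto
  moreover have "p \<in> XR N A b" "q \<in> XR N A b"
    using qp D unfolding XR_below_def by auto
  ultimately have "(p, q) \<in> E"
    unfolding E_iff by blast
  with qp show "q \<in> E `` D \<inter> XR_below R"
    by blast
qed

lemma closedin_saturation_Int_XR_below:
  assumes D: "closedin XxR D" "D \<subseteq> XR_below R0"
  shows "closedin XxR (E `` D \<inter> XR_below R)"
proof -
  obtain T where T: "\<And>p i. p \<in> XR N A b \<Longrightarrow> snd p \<le> max R R0 \<Longrightarrow> admissible i p \<Longrightarrow> i \<le> T"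
    by (rule admissible_bounded[of "max R R0"]) (rule that)
  have "compactin XxR D"
    using closed_compactin[OF compactin_XR_below D(2,1)] .
  then have "compactin (prod_topology XxR XxR) (XR_below R \<times> D)"
    using compactin_XR_below by (simp add: compactin_Times)
  then have "compactin XxR (fst ` ((XR_below R \<times> D) \<inter> orbits_meet i j))" for i j
    by (rule image_compactin[OF compact_Int_closedin[OF _ closedin_orbits_meet] continuous_map_fst])
  then have "closedin XxR (fst ` ((XR_below R \<times> D) \<inter> orbits_meet i j))" for i j
    by (rule compactin_imp_closedin[OF Hausdorff_space_XxR])
  then have "closedin XxR (\<Union>i\<le>T. \<Union>j\<le>T. fst ` ((XR_below R \<times> D) \<inter> orbits_meet i j))"
    by (intro closedin_Union; auto intro!: closedin_Union)
  then show ?thesis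
    using saturation_Int_XR_below_eq[OF D(2) T] by simp
qed

lemma closedin_saturation:
  assumes "closedin XxR D" "D \<subseteq> XR_below R0"
  shows "closedin XxR (E `` D)"
proof (rule closedin_prod_euclideanreal_if_slices_closed)
  have E_XR: "E `` D \<subseteq> XR N A b"
    using E_iff by blast
  then show "E `` D \<subseteq> topspace XxR"
    using XR_subset_topspace by blast
  fix R
  have "{p \<in> E `` D. snd p \<le> R} = E `` D \<inter> XR_below R"
    using E_XR unfolding XR_below_def by blast
  then show "closedin XxR {p \<in> E `` D. snd p \<le> R}"
    using closedin_saturation_Int_XR_below[OF assms] by simp
qed

end

theorem proposition2p4:
  fixes N :: nat and A :: "nat \<Rightarrow> nat \<Rightarrow> nat"
    and l k b :: "(nat \<Rightarrow> nat) \<Rightarrow> real"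
  assumes "N > 1"
    and "zero_one_matrix N A"
    and "irreducible_matrix N A"
    and "\<not> permutation_matrix N A"
    and "suspension_triplet N A l k b"
  shows "compact_space (suspension_space N A l k b) \<and> Hausdorff_space (suspension_space N A l k b)"
proof -
  interpret suspension N A l k b
    using assms(5) by unfold_locales
  let ?X = "XR_top N A b"
  have E: "equiv (topspace ?X) E"
    unfolding topspace_XR_top by (rule equiv_gen_equiv)
  have closedin_X: "closedin ?X D \<longleftrightarrow> closedin XxR D \<and> D \<subseteq> XR N A b" for D
    unfolding XR_top_def by (rule closedin_closed_subtopology[OF closedin_XR])
  obtain L where L: "\<And>x. x \<in> XA N A \<Longrightarrow> l x \<le> L"
    using roof_bounded by blast
  have K: "compactin ?X (XR_below L)"
    unfolding XR_top_def compactin_subtopology using compactin_XR_below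
    by (auto simp: XR_below_def)
  have meets: "\<And>p. p \<in> topspace ?X \<Longrightarrow> \<exists>q\<in>XR_below L. (p, q) \<in> E"
    unfolding topspace_XR_top using exists_equiv_XR_below L by blast
  have "closedin ?X (E `` D)" if "closedin ?X D" "D \<subseteq> XR_below L" for D
    using that closedin_saturation[of D L] E_iff unfolding closedin_X by blast
  moreover have "Hausdorff_space ?X"
    unfolding XR_top_def by (intro Hausdorff_space_subtopology Hausdorff_space_XxR)
  ultimately show ?thesis
    unfolding suspension_space_def
    using compact_space_quotient_topology[OF E K meets] Hausdorff_space_quotient_topology[OF E _ K meets]
    by blast
qed

end
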